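(* Assume $N\ge K_R$. With the definitions in the context, the value of the optimization problem (P3), i.e. $$\min_{\text{caching realizations}}\ \frac{1}{\pi(N,K_R)}\sum_{\mathbf{d}\in\mathcal{P}_{N,K_R}}H^*\!\left(\{\mathcal{P}_i\}_{i=1}^{K_T},\{\mathcal{Q}_j\}_{j=1}^{K_R},\mathbf{d}\right),$$ the minimum being over caching realizations satisfying the constraints below, is bounded from below by $$\frac{K_R\,N\,F\left(1-\frac{M_R}{N}\right)^2}{K_TM_T+K_RM_R}.$$
   Context: Setting: $K_T$ transmitters, $K_R$ receivers, a library of $N$ files $W_1,\dots,W_N$, each consisting of $F$ packets. A caching realization consists of sets $\mathcal{P}_i$ ($i\in[K_T]$) of packets cached at transmitter $\text{Tx}_i$ and $\mathcal{Q}_j$ ($j\in[K_R]$) of packets cached at receiver $\text{Rx}_j$. For a nonempty $\mathcal{T}\subseteq[K_T]$ and $\mathcal{R}\subseteq[K_R]$, let $a_{n,\mathcal{T},\mathcal{R}}$ be the number of packets of $W_n$ cached exactly at the transmitters in $\mathcal{T}$ and the receivers in $\mathcal{R}$. The constraints on the caching realization are: $\sum_{\emptyset\ne\mathcal{T}\subseteq[K_T]}\sum_{\mathcal{R}\subseteq[K_R]}a_{n,\mathcal{T},\mathcal{R}}=F$ for all $n$ (every packet is cached by at least one transmitter); $\sum_{n}\sum_{\mathcal{R}}\sum_{\mathcal{T}\ni i}a_{n,\mathcal{T},\mathcal{R}}\le M_TF$ for all $i\in[K_T]$; $\sum_n\sum_{\emptyset\ne\mathcal{T}}\sum_{\mathcal{R}\ni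 j}a_{n,\mathcal{T},\mathcal{R}}\le M_RF$ for all $j\in[K_R]$; $a_{n,\mathcal{T},\mathcal{R}}\ge0$. Feasibility: a set $\mathcal{D}$ of $L$ requested packets, to be sent in one block to $L$ distinct receivers, is feasible if $L\le\min_{l}(|\mathcal{T}_l|+|\mathcal{R}_l|)$, where $\mathcal{T}_l,\mathcal{R}_l$ are the sets of transmitters and receivers caching the $l$-th packet. (P1): for a caching realization and a demand vector $\mathbf{d}=(d_1,\dots,d_{K_R})$ (receiver $\text{Rx}_j$ requests $W_{d_j}$), $H^*(\{\mathcal{P}_i\},\{\mathcal{Q}_j\},\mathbf{d})$ is the minimum $H$ such that there exist feasible sets $\mathcal{D}_1,\dots,\mathcal{D}_H$ with $\bigcup_{m=1}^H\mathcal{D}_m=\bigcup_{j=1}^{K_R}(W_{d_j}\setminus\mathcal{Q}_j)$. $\mathcal{P}_{N,K_R}$ is the set of demand vectors with pairwise distinct entries, of cardinality $\pi(N,K_R)=\frac{N!}{(N-K_R)!}$. *)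

theory Defs
  imports Complex_Main
begin

text \<open>Packets are pairs (n, f): packet f (f < F) of file n (n < N).
  A caching realization is P :: nat \<Rightarrow> packet set (transmitter caches),
  Q :: nat \<Rightarrow> packet set (receiver caches).\<close>

type_synonym packet = "nat \<times> nat"

definition pfile :: "nat \<Rightarrow> nat \<Rightarrow> packet set" where
  "pfile F n = {n} \<times> {..<F}"

definition library :: "nat \<Rightarrow> nat \<Rightarrow> packet set" where
  "library N F = {..<N} \<times> {..<F}"

definition caching_realization ::
  "nat \<Rightarrow> nat \<Rightarrow> nat \<Rightarrow> nat \<Rightarrow> real \<Rightarrow> real \<Rightarrow>
   (nat \<Rightarrow> packet set) \<Rightarrow> (nat \<Rightarrow> packet set) \<Rightarrow> bool" where
  "caching_realization KT KR N F MT MR P Q \<longleftrightarrow>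
     (\<forall>i<KT. P i \<subseteq> library N F) \<and> (\<forall>j<KR. Q j \<subseteq> library N F) \<and>
     (\<forall>w\<in>library N F. \<exists>i<KT. w \<in> P i) \<and>
     (\<forall>i<KT. real (card (P i)) \<le> MT * real F) \<and>
     (\<forall>j<KR. real (card (Q j)) \<le> MR * real F)"

definition tx_set :: "nat \<Rightarrow> (nat \<Rightarrow> packet set) \<Rightarrow> packet \<Rightarrow> nat set" where
  "tx_set KT P w = {i. i < KT \<and> w \<in> P i}"

definition rx_set :: "nat \<Rightarrow> (nat \<Rightarrow> packet set) \<Rightarrow> packet \<Rightarrow> nat set" where
  "rx_set KR Q w = {j. j < KR \<and> w \<in> Q j}"

text \<open>A block D is a set of pairs (j, w): requested packet w is sent to receiver j.\<close>
definition feasible ::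
  "nat \<Rightarrow> nat \<Rightarrow> nat \<Rightarrow> (nat \<Rightarrow> packet set) \<Rightarrow> (nat \<Rightarrow> packet set) \<Rightarrow> nat list
   \<Rightarrow> (nat \<times> packet) set \<Rightarrow> bool" where
  "feasible KT KR F P Q d D \<longleftrightarrow>
     finite D \<and>
     (\<forall>(j, w)\<in>D. j < KR \<and> w \<in> pfile F (d ! j) - Q j) \<and>
     inj_on fst D \<and>
     (\<forall>(j, w)\<in>D. card D \<le> card (tx_set KT P w) + card (rx_set KR Q w))"

definition requested :: "nat \<Rightarrow> nat \<Rightarrow> (nat \<Rightarrow> packet set) \<Rightarrow> nat list \<Rightarrow> packet set" where
  "requested KR F Q d = (\<Union>j<KR. pfile F (d ! j) - Q j)"

definition Hstar ::
  "nat \<Rightarrow> nat \<Rightarrow> nat \<Rightarrow> (nat \<Rightarrow> packet set) \<Rightarrow> (nat \<Rightarrow> packet set) \<Rightarrow> nat list \<Rightarrow> nat" where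
  "Hstar KT KR F P Q d = (LEAST H. \<exists>Ds. length Ds = H \<and>
      (\<forall>D\<in>set Ds. feasible KT KR F P Q d D) \<and>
      (\<Union>D\<in>set Ds. snd ` D) = requested KR F Q d)"

definition distinct_demands :: "nat \<Rightarrow> nat \<Rightarrow> nat list set" where
  "distinct_demands N KR = {d. length d = KR \<and> distinct d \<and> set d \<subseteq> {..<N}}"

definition npi :: "nat \<Rightarrow> nat \<Rightarrow> real" where
  "npi N KR = fact N / fact (N - KR)"

end

theory Submission
  imports Defs "HOL-Combinatorics.Transposition"
begin

text \<open>Give each packet w the weight 1 / (|T_w| + |R_w|). A feasible block containing w has at
  most |T_w| + |R_w| packets, so every block carries total weight at most 1 and H^* is at least
  the weight of the requested packets. Over the demand vectors with distinct entries each
  receiver requests every file equally often, so the average requested weight is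
  (1/N) \<Sum>_w (K_R - r_w) / (t_w + r_w) over the library, where t_w and r_w count the
  transmitters and receivers caching w. The memory constraints give \<Sum>_w r_w \<le> K_R M_R F and
  \<Sum>_w t_w \<le> K_T M_T F, and Cauchy--Schwarz finishes.\<close>

lemma finite_distinct_demands: "finite (distinct_demands N KR)"
  unfolding distinct_demands_def
  by (rule finite_subset[OF _ finite_lists_length_eq[of "{..<N}" KR]]) auto

lemma real_card_distinct_demands:
  assumes "KR \<le> N"
  shows "real (card (distinct_demands N KR)) = npi N KR"
proof -
  have "card (distinct_demands N KR) = \<Prod>{N - KR + 1 .. N}"
    using card_lists_distinct_length_eq[of "{..<N}" KR] assms
    by (simp add: distinct_demands_def conj_commute)
  also have "\<dots> = fact N div fact (N - KR)"
    by (simp add: fact_div_fact)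
  finally have "card (distinct_demands N KR) = fact N div fact (N - KR)" .
  moreover have "real (fact N div fact (N - KR) :: nat) = fact N / fact (N - KR)"
    by (simp add: real_of_nat_div fact_dvd)
  ultimately show ?thesis
    by (simp add: npi_def)
qed

lemma nth_distinct_demand_less:
  assumes "d \<in> distinct_demands N KR" "j < KR"
  shows "d ! j < N"
  using assms unfolding distinct_demands_def by (auto intro: subsetD[OF _ nth_mem])

lemma length_distinct_demand: "d \<in> distinct_demands N KR \<Longrightarrow> length d = KR"
  by (simp add: distinct_demands_def)

lemma map_transpose_distinct_demands:
  assumes "d \<in> distinct_demands N KR" "a < N" "b < N"
  shows "map (transpose a b) d \<in> distinct_demands N KR"
  using assms by (auto simp: distinct_demands_def distinct_map transpose_def)

text \<open>Swapping the two file labels a and b is an involution on demand vectors, so every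
  file is requested by receiver j in the same number of demand vectors.\<close>
lemma card_distinct_demands_nth_eq:
  assumes "a < N" "b < N" "j < KR"
  shows "card {d \<in> distinct_demands N KR. d ! j = a} = card {d \<in> distinct_demands N KR. d ! j = b}"
proof (rule bij_betw_same_card)
  let ?\<tau> = "map (transpose a b)"
  show "bij_betw ?\<tau> {d \<in> distinct_demands N KR. d ! j = a} {d \<in> distinct_demands N KR. d ! j = b}"
    by (rule bij_betw_byWitness[where f' = ?\<tau>])
      (use assms in \<open>auto simp: map_transpose_distinct_demands length_distinct_demand\<close>)
qed

lemma sum_distinct_demands_nth:
  fixes f :: "nat \<Rightarrow> real"
  assumes "j < KR" "KR \<le> N"
  shows "(\<Sum>d\<in>distinct_demands N KR. f (d ! j))
           = real (card (distinct_demands N KR)) / real N * (\<Sum>n<N. f n)"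
proof -
  let ?DD = "distinct_demands N KR"
  define c where "c = card {d \<in> ?DD. d ! j = 0}"
  have fiber: "card {d \<in> ?DD. d ! j = n} = c" if "n < N" for n
    using card_distinct_demands_nth_eq[of n N 0 j KR] assms that unfolding c_def by simp
  have img: "(\<lambda>d. d ! j) ` ?DD \<subseteq> {..<N}"
    using nth_distinct_demand_less assms(1) by blast
  have grouped: "(\<Sum>d\<in>?DD. h (d ! j)) = (\<Sum>n<N. real c * h n)" for h :: "nat \<Rightarrow> real"
  proof -
    have "(\<Sum>d\<in>?DD. h (d ! j)) = (\<Sum>n<N. \<Sum>d\<in>{d \<in> ?DD. d ! j = n}. h (d ! j))"
      using sum.group[OF finite_distinct_demands finite_lessThan img, of "\<lambda>d. h (d ! j)"] by simp
    also have "\<dots> = (\<Sum>n<N. real c * h n)"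
      by (intro sum.cong) (simp_all add: fiber)
    finally show ?thesis .
  qed
  have "real (card ?DD) = real N * real c"
    using grouped[of "\<lambda>_. 1"] by simp
  then show ?thesis
    using grouped[of f] assms by (simp add: sum_distrib_left)
qed

lemma sum_UN_le_sum:
  fixes g :: "'a \<Rightarrow> 'b::ordered_ab_group_add"
  assumes "finite I" "\<And>i. i \<in> I \<Longrightarrow> finite (A i)" "\<And>x. 0 \<le> g x"
  shows "sum g (\<Union>i\<in>I. A i) \<le> (\<Sum>i\<in>I. sum g (A i))"
  using assms
proof (induction I rule: finite_induct)
  case empty
  then show ?case by simp
next
  case (insert i I)
  have "sum g (\<Union>k\<in>insert i I. A k) \<le> sum g (A i) + sum g (\<Union>k\<in>I. A k)"
    using sum_Un[of "A i" "\<Union>k\<in>I. A k" g] sum_nonneg[of "A i \<inter> (\<Union>k\<in>I. A k)" g] insert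
    by simp
  also have "\<dots> \<le> (\<Sum>k\<in>insert i I. sum g (A k))"
    using insert by simp
  finally show ?case .
qed

definition packet_weight ::
  "nat \<Rightarrow> nat \<Rightarrow> (nat \<Rightarrow> packet set) \<Rightarrow> (nat \<Rightarrow> packet set) \<Rightarrow> packet \<Rightarrow> real" where
  "packet_weight KT KR P Q w = 1 / real (card (tx_set KT P w) + card (rx_set KR Q w))"

lemma packet_weight_nonneg: "0 \<le> packet_weight KT KR P Q w"
  by (simp add: packet_weight_def)

text \<open>Each packet of a feasible block D has weight at most 1 / |D|.\<close>
lemma sum_packet_weight_feasible_le_1:
  assumes "feasible KT KR F P Q d D"
  shows "(\<Sum>w\<in>snd ` D. packet_weight KT KR P Q w) \<le> 1"
proof (cases "D = {}")
  case True
  then show ?thesis by simp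
next
  case False
  have "finite D" using assms by (simp add: feasible_def)
  then have D_pos: "0 < card D" using False by (simp add: card_gt_0_iff)
  have "packet_weight KT KR P Q w \<le> 1 / real (card D)" if "w \<in> snd ` D" for w
  proof -
    obtain j where "(j, w) \<in> D" using \<open>w \<in> snd ` D\<close> by force
    then have "card D \<le> card (tx_set KT P w) + card (rx_set KR Q w)"
      using assms unfolding feasible_def by blast
    then show ?thesis
      unfolding packet_weight_def using D_pos by (auto intro!: divide_left_mono)
  qed
  then have "(\<Sum>w\<in>snd ` D. packet_weight KT KR P Q w) \<le> real (card (snd ` D)) * (1 / real (card D))"
    by (rule sum_bounded_above)
  also have "\<dots> \<le> 1"
    using card_image_le[OF \<open>finite D\<close>, of snd] D_pos by (simp add: divide_le_eq_1)
  finally show ?thesis .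
qed

lemma sum_packet_weight_cover_le_length:
  assumes "\<forall>D\<in>set Ds. feasible KT KR F P Q d D"
  shows "(\<Sum>w\<in>(\<Union>D\<in>set Ds. snd ` D). packet_weight KT KR P Q w) \<le> real (length Ds)"
proof -
  have "(\<Sum>w\<in>(\<Union>D\<in>set Ds. snd ` D). packet_weight KT KR P Q w)
          \<le> (\<Sum>D\<in>set Ds. \<Sum>w\<in>snd ` D. packet_weight KT KR P Q w)"
    using assms by (intro sum_UN_le_sum) (auto simp: feasible_def packet_weight_nonneg)
  also have "\<dots> \<le> real (card (set Ds)) * 1"
    using assms sum_packet_weight_feasible_le_1 by (intro sum_bounded_above) blast
  also have "\<dots> \<le> real (length Ds)"
    by (simp add: card_length)
  finally show ?thesis .
qed

text \<open>Sending every requested packet in its own block gives a cover, so the minimum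
  defining Hstar is attained.\<close>
lemma requested_weight_le_Hstar:
  assumes cache: "caching_realization KT KR N F MT MR P Q"
    and d: "d \<in> distinct_demands N KR"
  shows "(\<Sum>w\<in>requested KR F Q d. packet_weight KT KR P Q w) \<le> real (Hstar KT KR F P Q d)"
proof -
  let ?cover = "\<lambda>Ds. (\<forall>D\<in>set Ds. feasible KT KR F P Q d D) \<and>
                     (\<Union>D\<in>set Ds. snd ` D) = requested KR F Q d"
  let ?S = "{(j, w). j < KR \<and> w \<in> pfile F (d ! j) - Q j}"
  have "finite ?S"
    by (rule finite_subset[of _ "{..<KR} \<times> library N F"])
      (use nth_distinct_demand_less[OF d] in \<open>auto simp: pfile_def library_def\<close>)
  then obtain l where l: "set l = ?S"
    using finite_list by blast
  have "feasible KT KR F P Q d {(j, w)}" if "(j, w) \<in> ?S" for j w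
  proof -
    have "w \<in> library N F"
      using that nth_distinct_demand_less[OF d] by (auto simp: pfile_def library_def)
    then obtain i where "i < KT" "w \<in> P i"
      using cache by (auto simp: caching_realization_def)
    then have "0 < card (tx_set KT P w)"
      by (auto simp: tx_set_def card_gt_0_iff)
    then show ?thesis
      using that by (auto simp: feasible_def)
  qed
  then have "?cover (map (\<lambda>p. {p}) l)"
    using l by (auto simp: requested_def)
  then have "\<exists>H Ds. length Ds = H \<and> ?cover Ds"
    by blast
  then have "\<exists>Ds. length Ds = Hstar KT KR F P Q d \<and> ?cover Ds"
    unfolding Hstar_def by (rule LeastI_ex)
  then obtain Ds where "length Ds = Hstar KT KR F P Q d" "?cover Ds"
    by blast
  then show ?thesis
    using sum_packet_weight_cover_le_length[of Ds KT KR F P Q d] by simp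
qed

lemma sum_sum_filter_swap:
  fixes g :: "'a \<Rightarrow> 'c::comm_semiring_1"
  assumes "finite A" "finite B"
  shows "(\<Sum>b\<in>B. \<Sum>a\<in>{a \<in> A. R a b}. g a) = (\<Sum>a\<in>A. of_nat (card {b \<in> B. R a b}) * g a)"
proof -
  have "(\<Sum>b\<in>B. \<Sum>a\<in>{a \<in> A. R a b}. g a) = (\<Sum>b\<in>B. \<Sum>a\<in>A. if R a b then g a else 0)"
    using assms by (simp add: sum.inter_filter)
  also have "\<dots> = (\<Sum>a\<in>A. \<Sum>b\<in>B. if R a b then g a else 0)"
    by (rule sum.swap)
  also have "\<dots> = (\<Sum>a\<in>A. of_nat (card {b \<in> B. R a b}) * g a)"
    using assms by (simp flip: sum.inter_filter)
  finally show ?thesis .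
qed

lemma sum_requested:
  fixes g :: "packet \<Rightarrow> real"
  assumes "d \<in> distinct_demands N KR"
  shows "(\<Sum>w\<in>requested KR F Q d. g w) = (\<Sum>j<KR. \<Sum>w\<in>pfile F (d ! j) - Q j. g w)"
  unfolding requested_def
proof (rule sum.UNION_disjoint)
  show "\<forall>i\<in>{..<KR}. \<forall>j\<in>{..<KR}. i \<noteq> j \<longrightarrow> (pfile F (d!i) - Q i) \<inter> (pfile F (d!j) - Q j) = {}"
    using assms by (auto simp: pfile_def distinct_demands_def nth_eq_iff_index_eq)
qed (simp_all add: pfile_def)

lemma sum_pfile_diff:
  fixes g :: "packet \<Rightarrow> real"
  shows "(\<Sum>n<N. \<Sum>w\<in>pfile F n - C. g w) = (\<Sum>w\<in>library N F - C. g w)"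
proof -
  have "library N F - C = (\<Union>n<N. pfile F n - C)"
    by (auto simp: library_def pfile_def)
  moreover have "sum g (\<Union>n<N. pfile F n - C) = (\<Sum>n<N. sum g (pfile F n - C))"
    by (rule sum.UNION_disjoint) (auto simp: pfile_def)
  ultimately show ?thesis
    by simp
qed

lemma sum_requested_distinct_demands:
  fixes g :: "packet \<Rightarrow> real"
  assumes "KR \<le> N"
  shows "(\<Sum>d\<in>distinct_demands N KR. \<Sum>w\<in>requested KR F Q d. g w)
           = real (card (distinct_demands N KR)) / real N
             * (\<Sum>w\<in>library N F. (real KR - real (card (rx_set KR Q w))) * g w)"
proof -
  let ?c = "real (card (distinct_demands N KR)) / real N"
  have uncached: "real (card {j. j < KR \<and> w \<notin> Q j}) = real KR - real (card (rx_set KR Q w))"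
    for w
  proof -
    have "{j. j < KR \<and> w \<notin> Q j} = {..<KR} - rx_set KR Q w"
      by (auto simp: rx_set_def)
    moreover have "rx_set KR Q w \<subseteq> {..<KR}"
      by (auto simp: rx_set_def)
    moreover have "card (rx_set KR Q w) \<le> KR"
      using card_mono[OF finite_lessThan \<open>rx_set KR Q w \<subseteq> {..<KR}\<close>] by simp
    ultimately show ?thesis
      by (simp add: card_Diff_subset finite_subset of_nat_diff)
  qed
  have "(\<Sum>d\<in>distinct_demands N KR. \<Sum>w\<in>requested KR F Q d. g w)
          = (\<Sum>j<KR. \<Sum>d\<in>distinct_demands N KR. \<Sum>w\<in>pfile F (d ! j) - Q j. g w)"
    by (simp add: sum_requested cong: sum.cong) (rule sum.swap)
  also have "\<dots> = (\<Sum>j<KR. ?c * (\<Sum>n<N. \<Sum>w\<in>pfile F n - Q j. g w))"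
    using assms by (intro sum.cong refl sum_distinct_demands_nth) auto
  also have "\<dots> = ?c * (\<Sum>j<KR. \<Sum>w\<in>library N F - Q j. g w)"
    by (simp add: sum_pfile_diff sum_distrib_left)
  also have "\<dots> = ?c * (\<Sum>w\<in>library N F. (real KR - real (card (rx_set KR Q w))) * g w)"
    by (simp add: set_diff_eq sum_sum_filter_swap library_def uncached)
  finally show ?thesis .
qed

lemma sum_card_caching_le:
  assumes "finite L" "\<forall>i<K. C i \<subseteq> L" "\<forall>i<K. real (card (C i)) \<le> M"
  shows "(\<Sum>w\<in>L. real (card {i. i < K \<and> w \<in> C i})) \<le> real K * M"
proof -
  have "(\<Sum>w\<in>L. real (card {i. i < K \<and> w \<in> C i})) = (\<Sum>i<K. real (card {w \<in> L. w \<in> C i}))"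
    using sum_sum_filter_swap[OF \<open>finite L\<close> finite_lessThan, of "\<lambda>_. 1::real" "\<lambda>w i. w \<in> C i"]
    by simp
  also have "\<dots> = (\<Sum>i<K. real (card (C i)))"
    using assms(2) by (intro sum.cong refl arg_cong[where f = "\<lambda>S. real (card S)"]) auto
  also have "\<dots> \<le> real K * M"
    using assms(3) sum_bounded_above[of "{..<K}" "\<lambda>i. real (card (C i))" M] by simp
  finally show ?thesis .
qed

text \<open>A Cauchy--Schwarz bound, using a x^2 \<le> K a x; it is proved through the tangent-line
  estimate a / s \<ge> 2 \<theta> a - \<theta>^2 K s at \<theta> = A / (K S).\<close>
lemma sum_divide_ge:
  fixes a s :: "'a \<Rightarrow> real"
  assumes "finite X" "0 < K"
    and a: "\<And>x. x \<in> X \<Longrightarrow> 0 \<le> a x \<and> a x \<le> K" and s: "\<And>x. x \<in> X \<Longrightarrow> 0 < s x"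
    and "0 \<le> A" "A \<le> (\<Sum>x\<in>X. a x)" "(\<Sum>x\<in>X. s x) \<le> S"
  shows "A\<^sup>2 / (K * S) \<le> (\<Sum>x\<in>X. a x / s x)"
proof (cases "S = 0")
  case True
  have "0 \<le> a x / s x" if "x \<in> X" for x
    using a[OF that] s[OF that] by simp
  then show ?thesis
    using True by (simp add: sum_nonneg)
next
  case False
  have "0 \<le> S"
    using s \<open>(\<Sum>x\<in>X. s x) \<le> S\<close> sum_nonneg[of X s] by force
  with False \<open>0 < K\<close> have KS: "0 < K * S"
    by simp
  define \<theta> where "\<theta> = A / (K * S)"
  have "0 \<le> \<theta>"
    using KS \<open>0 \<le> A\<close> by (simp add: \<theta>_def)
  have tangent: "2 * \<theta> * a x - \<theta>\<^sup>2 * K * s x \<le> a x / s x" if "x \<in> X" for x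
  proof -
    have "0 \<le> a x * (1 - \<theta> * s x)\<^sup>2"
      using a[OF that] by simp
    moreover have "\<theta>\<^sup>2 * a x * (s x)\<^sup>2 \<le> \<theta>\<^sup>2 * K * (s x)\<^sup>2"
      using a[OF that] by (intro mult_right_mono mult_left_mono) auto
    ultimately have "(2 * \<theta> * a x - \<theta>\<^sup>2 * K * s x) * s x \<le> a x"
      by (simp add: power2_eq_square algebra_simps)
    then show ?thesis
      using s[OF that] by (simp add: field_simps)
  qed
  have "A\<^sup>2 / (K * S) = 2 * \<theta> * A - \<theta>\<^sup>2 * K * S"
    using KS by (simp add: \<theta>_def field_simps power2_eq_square)
  also have "\<dots> \<le> 2 * \<theta> * (\<Sum>x\<in>X. a x) - \<theta>\<^sup>2 * K * (\<Sum>x\<in>X. s x)"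
    using assms \<open>0 \<le> \<theta>\<close> by (intro diff_mono mult_left_mono) auto
  also have "\<dots> = (\<Sum>x\<in>X. 2 * \<theta> * a x - \<theta>\<^sup>2 * K * s x)"
    by (simp add: sum_subtractf sum_distrib_left)
  also have "\<dots> \<le> (\<Sum>x\<in>X. a x / s x)"
    using tangent by (rule sum_mono)
  finally show ?thesis .
qed

lemma sum_uncached_weight_ge:
  assumes cache: "caching_realization KT KR N F MT MR P Q"
    and "0 < KR" "0 < F" "MR \<le> real N"
  shows "real KR * real F * (real N - MR)\<^sup>2 / (real KT * MT + real KR * MR)
           \<le> (\<Sum>w\<in>library N F. (real KR - real (card (rx_set KR Q w))) * packet_weight KT KR P Q w)"
proof -
  let ?L = "library N F"
  let ?r = "\<lambda>w. real (card (rx_set KR Q w))"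
  let ?t = "\<lambda>w. real (card (tx_set KT P w))"
  have "finite ?L" and card_L: "card ?L = N * F"
    by (simp_all add: library_def card_cartesian_product)
  have r_le: "?r w \<le> real KR" for w
    using card_mono[of "{..<KR}" "rx_set KR Q w"] by (auto simp: rx_set_def)
  have t_pos: "0 < ?t w" if "w \<in> ?L" for w
  proof -
    obtain i where "i < KT" "w \<in> P i"
      using cache \<open>w \<in> ?L\<close> by (auto simp: caching_realization_def)
    then show ?thesis
      by (auto simp: tx_set_def card_gt_0_iff)
  qed
  have sum_r: "(\<Sum>w\<in>?L. ?r w) \<le> real KR * (MR * real F)"
    using cache \<open>finite ?L\<close> unfolding rx_set_def caching_realization_def
    by (intro sum_card_caching_le) auto
  have sum_t: "(\<Sum>w\<in>?L. ?t w) \<le> real KT * (MT * real F)"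
    using cache \<open>finite ?L\<close> unfolding tx_set_def caching_realization_def
    by (intro sum_card_caching_le) auto
  have "real KR * real F * (real N - MR) \<le> (\<Sum>w\<in>?L. real KR - ?r w)"
    using sum_r by (simp add: sum_subtractf card_L algebra_simps)
  moreover have "(\<Sum>w\<in>?L. ?t w + ?r w) \<le> real F * (real KT * MT + real KR * MR)"
    using sum_r sum_t by (simp add: sum.distrib algebra_simps)
  ultimately have "(real KR * real F * (real N - MR))\<^sup>2 / (real KR * (real F * (real KT * MT + real KR * MR)))
      \<le> (\<Sum>w\<in>?L. (real KR - ?r w) / (?t w + ?r w))"
    using r_le t_pos assms(2,4) \<open>finite ?L\<close>
    by (intro sum_divide_ge) (auto simp: add_pos_nonneg)
  moreover have "(real KR * real F * (real N - MR))\<^sup>2 / (real KR * (real F * (real KT * MT + real KR * MR)))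
      = real KR * real F * (real N - MR)\<^sup>2 / (real KT * MT + real KR * MR)"
    using \<open>0 < KR\<close> \<open>0 < F\<close> by (simp add: power2_eq_square)
  ultimately show ?thesis
    by (simp add: packet_weight_def)
qed

theorem lemma4:
  fixes KT KR N F :: nat and MT MR :: real
    and P Q :: "nat \<Rightarrow> packet set"
  assumes "KT \<ge> 1" and "KR \<ge> 1" and "F \<ge> 1" and "N \<ge> KR"
    and "0 \<le> MT" and "0 \<le> MR" and "MR \<le> real N"
    and "caching_realization KT KR N F MT MR P Q"
  shows "real KR * real N * real F * (1 - MR / real N)^2 / (real KT * MT + real KR * MR)
           \<le> (1 / npi N KR) * (\<Sum>d\<in>distinct_demands N KR. real (Hstar KT KR F P Q d))"
proof -
  let ?DD = "distinct_demands N KR"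
  let ?weight = "packet_weight KT KR P Q"
  let ?D = "real KT * MT + real KR * MR"
  have "0 < N" "0 < npi N KR"
    using assms(2,4) by (simp_all add: npi_def)
  have "real N * (1 - MR / real N)\<^sup>2 = (real N - MR)\<^sup>2 / real N"
    using \<open>0 < N\<close> by (simp add: field_simps power2_eq_square)
  then have "real KR * real N * real F * (1 - MR / real N)^2 / ?D
               = real KR * real F * (real N - MR)\<^sup>2 / ?D / real N"
    by (metis divide_divide_eq_left' mult.commute mult.left_commute times_divide_eq_right)
  also have "\<dots> \<le> (\<Sum>w\<in>library N F. (real KR - real (card (rx_set KR Q w))) * ?weight w) / real N"
    using sum_uncached_weight_ge[OF assms(8) _ _ assms(7)] assms(2,3)
    by (intro divide_right_mono) auto
  also have "\<dots> = (1 / npi N KR) * (\<Sum>d\<in>?DD. \<Sum>w\<in>requested KR F Q d. ?weight w)"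
    using \<open>0 < npi N KR\<close>
    by (simp add: sum_requested_distinct_demands[OF assms(4)] real_card_distinct_demands[OF assms(4)])
  also have "\<dots> \<le> (1 / npi N KR) * (\<Sum>d\<in>?DD. real (Hstar KT KR F P Q d))"
    using \<open>0 < npi N KR\<close> requested_weight_le_Hstar[OF assms(8)]
    by (intro mult_left_mono sum_mono) auto
  finally show ?thesis .
qed

end
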